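(* Let $2\le p<\infty$ and $1<q\le\infty$, and let $X$ and $Y$ be Banach spaces such that $X$ is an $\mathcal L_{p^*}$-space, where $\frac1p+\frac1{p^*}=1$. Then every almost $p$-summing operator $u:X\to Y$ is Cohen strongly $q$-summing; that is, $\Pi_{al.s.p}(X,Y)\subseteq\mathcal D_q(X,Y)$.
   Context: $r_i$ denote the Rademacher functions. For $1\le s\le\infty$ and a Banach space $E$, $\|(x_i)_{i=1}^m\|_{w,s}:=\sup_{x^*\in B_{E^*}}\|(x^*(x_i))_{i=1}^m\|_s$. An operator $u\in\mathcal L(X,Y)$ is almost $p$-summing ($u\in\Pi_{al.s.p}(X,Y)$) if there is $C\ge0$ with $\left(\int_0^1\left\|\sum_{i=1}^m r_i(t)u(x_i)\right\|^2dt\right)^{1/2}\le C\|(x_i)_{i=1}^m\|_{w,p}$ for all $m$ and $x_1,\dots,x_m\in X$. For $1<q\le\infty$ with conjugate $q^*$, $u$ is Cohen strongly $q$-summing ($u\in\mathcal D_q(X,Y)$) if there is $C\ge0$ with $\sum_{i=1}^m|y_i^*(u(x_i))|\le C\|(x_i)_{i=1}^m\|_q\,\|(y_i^* )_{i=1}^m\|_{w,q^*}$ for all $m$, $x_1,\dots,x_m\in X$, $y_1^*,\dots,y_m^*\in Y^*$, where $\|(x_i)\|_q=(\sum\|x_i\|^q)^{1/q}$. A Banach space $X$ is an $\mathcal L_r$-space if there is $\lambda>1$ such that every finite-dimensional subspace $E$ of $X$ is contained in a finite-dimensional subspace $F$ of $X$ admitting an isomorphism $v:F\to\ell_r^{\dim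 F}$ with $\|v\|\|v^{-1}\|\le\lambda$. *)

theory Defs
  imports "HOL-Analysis.Analysis"
begin

definition rademacher :: "nat \<Rightarrow> real \<Rightarrow> real" where
  "rademacher i t = sgn (sin (2 ^ i * pi * t))"

definition seq_norm :: "ereal \<Rightarrow> nat \<Rightarrow> (nat \<Rightarrow> real) \<Rightarrow> real" where
  "seq_norm s m a =
     (if s = \<infinity> then Sup (insert 0 ((\<lambda>i. \<bar>a i\<bar>) ` {1..m}))
      else (\<Sum>i=1..m. \<bar>a i\<bar> powr real_of_ereal s) powr (1 / real_of_ereal s))"

definition strong_norm :: "ereal \<Rightarrow> nat \<Rightarrow> (nat \<Rightarrow> 'a::real_normed_vector) \<Rightarrow> real" where
  "strong_norm s m x = seq_norm s m (\<lambda>i. norm (x i))"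

definition weak_norm :: "ereal \<Rightarrow> nat \<Rightarrow> (nat \<Rightarrow> 'a::real_normed_vector) \<Rightarrow> real" where
  "weak_norm s m x =
     Sup ((\<lambda>f::'a \<Rightarrow>\<^sub>L real. seq_norm s m (\<lambda>i. blinfun_apply f (x i))) ` {f. norm f \<le> 1})"

definition conj_exp :: "ereal \<Rightarrow> ereal" where
  "conj_exp q = (if q = \<infinity> then 1 else ereal (real_of_ereal q / (real_of_ereal q - 1)))"

definition almost_summing :: "real \<Rightarrow> ('a::real_normed_vector \<Rightarrow>\<^sub>L 'b::real_normed_vector) \<Rightarrow> bool" where
  "almost_summing p u \<longleftrightarrow>
     (\<exists>C\<ge>0. \<forall>(m::nat) (x::nat \<Rightarrow> 'a).
        sqrt (integral {0..1} (\<lambda>t. (norm (\<Sum>i=1..m. rademacher i t *\<^sub>R blinfun_apply u (x i)))\<^sup>2))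
          \<le> C * weak_norm (ereal p) m x)"

definition Cohen_strongly_summing :: "ereal \<Rightarrow> ('a::real_normed_vector \<Rightarrow>\<^sub>L 'b::real_normed_vector) \<Rightarrow> bool" where
  "Cohen_strongly_summing q u \<longleftrightarrow>
     (\<exists>C\<ge>0. \<forall>(m::nat) (x::nat \<Rightarrow> 'a) (y::nat \<Rightarrow> ('b \<Rightarrow>\<^sub>L real)).
        (\<Sum>i=1..m. \<bar>blinfun_apply (y i) (blinfun_apply u (x i))\<bar>)
          \<le> C * strong_norm q m x * weak_norm (conj_exp q) m y)"

definition lr_norm :: "real \<Rightarrow> nat \<Rightarrow> (nat \<Rightarrow> real) \<Rightarrow> real" where
  "lr_norm r n y = (\<Sum>i<n. \<bar>y i\<bar> powr r) powr (1 / r)"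

definition fin_dim_subspace :: "'a::real_vector set \<Rightarrow> bool" where
  "fin_dim_subspace E \<longleftrightarrow> subspace E \<and> (\<exists>B. finite B \<and> E = span B)"

definition Lr_space :: "real \<Rightarrow> 'a::real_normed_vector itself \<Rightarrow> bool" where
  "Lr_space r _ \<longleftrightarrow>
     (\<exists>lam>1. \<forall>E::'a set. fin_dim_subspace E \<longrightarrow>
        (\<exists>F. fin_dim_subspace F \<and> E \<subseteq> F \<and>
           (\<exists>(v::'a \<Rightarrow> nat \<Rightarrow> real) a b.
              (\<forall>x\<in>F. \<forall>y\<in>F. v (x + y) = (\<lambda>i. v x i + v y i)) \<and>
              (\<forall>x\<in>F. \<forall>c. v (c *\<^sub>R x) = (\<lambda>i. c * v x i)) \<and>
              bij_betw v F {z. \<forall>i\<ge>dim F. z i = 0} \<and>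
              (\<forall>x\<in>F. lr_norm r (dim F) (v x) \<le> a * norm x) \<and>
              (\<forall>x\<in>F. norm x \<le> b * lr_norm r (dim F) (v x)) \<and>
              a * b \<le> lam)))"

end

theory Submission
  imports Defs
begin

(* Given x_1..x_m in X, enlarge their span to a finite-dimensional subspace F with coordinates
   v : F -> l_r^n, where r = p/(p-1) <= 2 and norm v <= a, norm (inverse v) <= b, a * b <= lam.
   Let e_1..e_n be the preimages of the unit vectors. Since l_p^n is the dual of l_r^n, the
   weak l_p-norm of (e_j) is at most b, so almost p-summability bounds the Rademacher average
   E |sum_j eps_j u(e_j)| by C b. Expanding x_i = sum_j v(x_i)_j e_j, Cauchy-Schwarz, the
   inequality |.|_2 <= |.|_r and Khintchine's inequality give
     |y_i(u x_i)| <= sqrt 3 * a * |x_i| * E |y_i(sum_j eps_j u(e_j))|.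
   Summing over i and applying Hoelder's inequality inside the average yields
     sum_i |y_i(u x_i)| <= sqrt 3 * C * lam * |(x_i)|_q * |(y_i)|_{w,q*},
   with a constant independent of m and of F. Rademacher integrals over [0,1] are evaluated as
   averages over all 2^n sign patterns. *)

lemma sum_atLeast1_atMost_Suc:
  "(\<Sum>k=1..Suc N. f k) = f 1 + (\<Sum>k=1..N. f (Suc k))"
  by (simp add: sum.atLeast_Suc_atMost sum.atLeast_Suc_atMost_Suc_shift del: sum.cl_ivl_Suc)

lemma rademacher_Suc: "rademacher (Suc k) t = rademacher k (2 * t)"
  by (simp add: rademacher_def mult_ac)

lemma rademacher_Suc_shift:
  assumes "k \<ge> 1"
  shows "rademacher (Suc k) t = rademacher k (2 * t - 1)"
proof -
  have arg: "2 ^ k * pi * (2 * t - 1) = 2 ^ Suc k * pi * t - real (2 ^ k) * pi"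
    by (simp add: algebra_simps)
  have "cos (real (2 ^ k) * pi) = 1"
    unfolding cos_npi using assms by simp
  then show ?thesis
    unfolding rademacher_def arg sin_diff sin_npi by simp
qed

lemma rademacher_1_left: "0 < t \<Longrightarrow> t < 1/2 \<Longrightarrow> rademacher 1 t = 1"
  by (simp add: rademacher_def sin_gt_zero)

lemma rademacher_1_right:
  assumes "1/2 < t" "t < 1"
  shows "rademacher 1 t = -1"
proof -
  have "0 < sin (2 * pi * t - pi)"
    by (rule sin_gt_zero) (use assms in \<open>auto simp: algebra_simps\<close>)
  then show ?thesis
    by (simp add: rademacher_def sin_minus_pi)
qed

definition rademacher_sum :: "nat \<Rightarrow> (nat \<Rightarrow> 'v::real_vector) \<Rightarrow> real \<Rightarrow> 'v" where
  "rademacher_sum N c t = (\<Sum>k=1..N. rademacher k t *\<^sub>R c k)"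

text \<open>\<open>sign_average N c f\<close> is the mean of \<open>f (\<Sum>k=1..N. \<epsilon>\<^sub>k *\<^sub>R c k)\<close> over all
  \<open>2 ^ N\<close> choices of signs \<open>\<epsilon>\<^sub>k \<in> {-1, 1}\<close>.\<close>

fun sign_average :: "nat \<Rightarrow> (nat \<Rightarrow> 'v::real_vector) \<Rightarrow> ('v \<Rightarrow> real) \<Rightarrow> real" where
  "sign_average 0 c f = f 0"
| "sign_average (Suc N) c f =
     (sign_average N (\<lambda>k. c (Suc k)) (\<lambda>x. f (c 1 + x))
       + sign_average N (\<lambda>k. c (Suc k)) (\<lambda>x. f (x - c 1))) / 2"

lemma rademacher_sum_Suc:
  assumes "\<And>k. k \<ge> 1 \<Longrightarrow> rademacher (Suc k) t = rademacher k s"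
  shows "rademacher_sum (Suc N) c t = rademacher 1 t *\<^sub>R c 1 + rademacher_sum N (\<lambda>k. c (Suc k)) s"
  unfolding rademacher_sum_def sum_atLeast1_atMost_Suc using assms by (auto intro!: sum.cong)

lemma has_integral_rademacher_sum:
  "((\<lambda>t. f (rademacher_sum N c t)) has_integral sign_average N c f) {0..1}"
proof (induction N arbitrary: c f)
  case 0
  then show ?case
    using has_integral_const_real[of "f 0" 0 1] by (simp add: rademacher_sum_def)
next
  case (Suc N)
  define c' where "c' = (\<lambda>k. c (Suc k))"
  define A_pos A_neg where "A_pos = sign_average N c' (\<lambda>x. f (c 1 + x))"
    and "A_neg = sign_average N c' (\<lambda>x. f (x - c 1))"
  have IH: "((\<lambda>s. g (rademacher_sum N c' s)) has_integral sign_average N c' g) (cbox 0 1)" for g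
    using Suc.IH[where c=c' and f=g] by simp
  have "((\<lambda>t. f (c 1 + rademacher_sum N c' (2 * t))) has_integral A_pos / 2) {0..1/2}"
    using has_integral_affinity'[OF IH[of "\<lambda>x. f (c 1 + x)"], of 2 0] by (simp add: A_pos_def)
  then have left: "((\<lambda>t. f (rademacher_sum (Suc N) c t)) has_integral A_pos / 2) {0..1/2}"
  proof (rule has_integral_spike_finite_eq[of "{0, 1/2}", THEN iffD1, rotated 2])
    fix t :: real
    assume "t \<in> {0..1/2} - {0, 1/2}"
    then have "rademacher 1 t = 1"
      by (intro rademacher_1_left) auto
    then show "f (rademacher_sum (Suc N) c t) = f (c 1 + rademacher_sum N c' (2 * t))"
      by (simp add: rademacher_sum_Suc rademacher_Suc c'_def)
  qed simp
  have "((\<lambda>t. f (rademacher_sum N c' (2 * t - 1) - c 1)) has_integral A_neg / 2) {1/2..1}"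
    using has_integral_affinity'[OF IH[of "\<lambda>x. f (x - c 1)"], of 2 "-1"] by (simp add: A_neg_def)
  then have right: "((\<lambda>t. f (rademacher_sum (Suc N) c t)) has_integral A_neg / 2) {1/2..1}"
  proof (rule has_integral_spike_finite_eq[of "{1/2, 1}", THEN iffD1, rotated 2])
    fix t :: real
    assume "t \<in> {1/2..1} - {1/2, 1}"
    then have "rademacher 1 t = -1"
      by (intro rademacher_1_right) auto
    then show "f (rademacher_sum (Suc N) c t) = f (rademacher_sum N c' (2 * t - 1) - c 1)"
      by (simp add: rademacher_sum_Suc[where s="2 * t - 1"] rademacher_Suc_shift c'_def)
  qed simp
  have "((\<lambda>t. f (rademacher_sum (Suc N) c t)) has_integral (A_pos / 2 + A_neg / 2)) {0..1}"
    by (rule has_integral_combine[OF _ _ left right]) auto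
  then show ?case
    by (simp add: A_pos_def A_neg_def c'_def add_divide_distrib)
qed

lemma sign_average_add:
  "sign_average N c (\<lambda>x. f x + g x) = sign_average N c f + sign_average N c g"
  by (induction N arbitrary: c f g) (simp_all add: add_divide_distrib)

lemma sign_average_diff:
  "sign_average N c (\<lambda>x. f x - g x) = sign_average N c f - sign_average N c g"
  by (induction N arbitrary: c f g) (simp_all add: add_divide_distrib diff_divide_distrib)

lemma sign_average_cmult: "sign_average N c (\<lambda>x. a * f x) = a * sign_average N c f"
  by (induction N arbitrary: c f) (simp_all add: distrib_left)

lemma sign_average_const [simp]: "sign_average N c (\<lambda>x. a) = a"
  by (induction N arbitrary: c) simp_all

lemma sign_average_sum:
  "finite I \<Longrightarrow> sign_average N c (\<lambda>x. \<Sum>i\<in>I. f i x) = (\<Sum>i\<in>I. sign_average N c (f i))"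
  by (induction I rule: finite_induct) (simp_all add: sign_average_add)

lemma sign_average_Suc_symmetrized:
  "sign_average (Suc N) c f = sign_average N (\<lambda>k. c (Suc k)) (\<lambda>x. (f (c 1 + x) + f (x - c 1)) / 2)"
proof -
  have "(\<lambda>x. (f (c 1 + x) + f (x - c 1)) / 2) = (\<lambda>x. (1/2) * f (c 1 + x) + (1/2) * f (x - c 1))"
    by (simp add: fun_eq_iff)
  then show ?thesis
    by (simp only: sign_average.simps sign_average_add sign_average_cmult) simp
qed

lemma sign_average_mono: "(\<And>x. f x \<le> g x) \<Longrightarrow> sign_average N c f \<le> sign_average N c g"
  by (induction N arbitrary: c f g) (simp_all add: add_mono divide_right_mono)

lemma sign_average_nonneg: "(\<And>x. 0 \<le> f x) \<Longrightarrow> 0 \<le> sign_average N c f"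
  using sign_average_mono[of "\<lambda>x. 0" f] by simp

lemma sign_average_compose_linear:
  assumes "linear h"
  shows "sign_average N c (\<lambda>x. f (h x)) = sign_average N (\<lambda>k. h (c k)) f"
proof (induction N arbitrary: c f)
  case 0
  then show ?case using assms by (simp add: linear_0)
next
  case (Suc N)
  have "sign_average N (\<lambda>k. c (Suc k)) (\<lambda>x. f (h (c 1 + x)))
      = sign_average N (\<lambda>k. h (c (Suc k))) (\<lambda>y. f (h (c 1) + y))"
    using Suc.IH[where f="\<lambda>y. f (h (c 1) + y)"] assms by (simp add: linear_add)
  moreover have "sign_average N (\<lambda>k. c (Suc k)) (\<lambda>x. f (h (x - c 1)))
      = sign_average N (\<lambda>k. h (c (Suc k))) (\<lambda>y. f (y - h (c 1)))"
    using Suc.IH[where f="\<lambda>y. f (y - h (c 1))"] assms by (simp add: linear_diff)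
  ultimately show ?case by simp
qed

lemma square_le_mult_if_quadratic_nonneg:
  fixes G H P :: real
  assumes quadratic: "\<And>l. 0 \<le> G - 2 * l * P + l\<^sup>2 * H" and "0 \<le> H"
  shows "P\<^sup>2 \<le> G * H"
proof (cases "H = 0")
  case True
  have "P = 0"
  proof (rule ccontr)
    assume "P \<noteq> 0"
    then show False
      using quadratic[of "(G + 1) / (2 * P)"] True by (simp add: field_simps)
  qed
  with True show ?thesis by simp
next
  case False
  with \<open>0 \<le> H\<close> have "0 < H" by simp
  have "0 \<le> G - 2 * (P / H) * P + (P / H)\<^sup>2 * H" by (rule quadratic)
  also have "\<dots> = G - P\<^sup>2 / H"
    using \<open>0 < H\<close> by (simp add: field_simps power2_eq_square)
  finally show ?thesis
    using \<open>0 < H\<close> by (simp add: field_simps)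
qed

lemma sign_average_Cauchy_Schwarz:
  "(sign_average N c (\<lambda>x. g x * h x))\<^sup>2
     \<le> sign_average N c (\<lambda>x. (g x)\<^sup>2) * sign_average N c (\<lambda>x. (h x)\<^sup>2)"
proof (rule square_le_mult_if_quadratic_nonneg)
  fix l :: real
  have "0 \<le> sign_average N c (\<lambda>x. (g x - l * h x)\<^sup>2)"
    by (rule sign_average_nonneg) simp
  also have "(\<lambda>x. (g x - l * h x)\<^sup>2) = (\<lambda>x. (g x)\<^sup>2 - 2 * l * (g x * h x) + l\<^sup>2 * (h x)\<^sup>2)"
    by (simp add: fun_eq_iff power2_eq_square algebra_simps)
  finally show "0 \<le> sign_average N c (\<lambda>x. (g x)\<^sup>2) - 2 * l * sign_average N c (\<lambda>x. g x * h x)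
      + l\<^sup>2 * sign_average N c (\<lambda>x. (h x)\<^sup>2)"
    by (simp only: sign_average_add sign_average_diff sign_average_cmult)
qed (rule sign_average_nonneg, simp)

lemma sign_average_le_sqrt: "sign_average N c g \<le> sqrt (sign_average N c (\<lambda>x. (g x)\<^sup>2))"
  using sign_average_Cauchy_Schwarz[of N c g "\<lambda>x. 1"] by (simp add: real_le_rsqrt)

lemma sign_average_square:
  fixes c :: "nat \<Rightarrow> real"
  shows "sign_average N c (\<lambda>x. x\<^sup>2) = (\<Sum>k=1..N. (c k)\<^sup>2)"
proof (induction N arbitrary: c)
  case (Suc N)
  have "(\<lambda>x. ((c 1 + x)\<^sup>2 + (x - c 1)\<^sup>2) / 2) = (\<lambda>x. (c 1)\<^sup>2 + x\<^sup>2)"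
    by (simp add: fun_eq_iff power2_eq_square algebra_simps)
  then have "sign_average (Suc N) c (\<lambda>x. x\<^sup>2) = sign_average N (\<lambda>k. c (Suc k)) (\<lambda>x. (c 1)\<^sup>2 + x\<^sup>2)"
    by (simp only: sign_average_Suc_symmetrized)
  also have "\<dots> = (c 1)\<^sup>2 + (\<Sum>k=1..N. (c (Suc k))\<^sup>2)"
    by (simp add: sign_average_add Suc.IH)
  finally show ?case
    by (simp only: sum_atLeast1_atMost_Suc)
qed simp

lemma sign_average_fourth_power_le:
  fixes c :: "nat \<Rightarrow> real"
  shows "sign_average N c (\<lambda>x. x ^ 4) \<le> 3 * (\<Sum>k=1..N. (c k)\<^sup>2)\<^sup>2"
proof (induction N arbitrary: c)
  case (Suc N)
  define a M where "a = c 1" and "M = (\<Sum>k=1..N. (c (Suc k))\<^sup>2)"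
  have "(\<lambda>x. ((a + x) ^ 4 + (x - a) ^ 4) / 2) = (\<lambda>x. a ^ 4 + 6 * a\<^sup>2 * x\<^sup>2 + x ^ 4)"
    by (simp add: fun_eq_iff power2_eq_square power4_eq_xxxx algebra_simps)
  then have "sign_average (Suc N) c (\<lambda>x. x ^ 4)
      = sign_average N (\<lambda>k. c (Suc k)) (\<lambda>x. a ^ 4 + 6 * a\<^sup>2 * x\<^sup>2 + x ^ 4)"
    by (simp only: sign_average_Suc_symmetrized a_def)
  also have "\<dots> = a ^ 4 + 6 * a\<^sup>2 * M + sign_average N (\<lambda>k. c (Suc k)) (\<lambda>x. x ^ 4)"
    by (simp add: sign_average_add sign_average_cmult sign_average_square M_def)
  also have "\<dots> \<le> a ^ 4 + 6 * a\<^sup>2 * M + 3 * M\<^sup>2"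
    using Suc.IH[of "\<lambda>k. c (Suc k)"] by (simp add: M_def)
  also have "\<dots> \<le> 3 * (a\<^sup>2 + M)\<^sup>2"
  proof -
    have "0 \<le> a ^ 4" by simp
    then show ?thesis by (simp add: power2_eq_square power4_eq_xxxx algebra_simps)
  qed
  finally show ?case
    by (simp only: sum_atLeast1_atMost_Suc a_def M_def)
qed simp

text \<open>Khintchine's inequality with constant \<open>sqrt 3\<close>: if \<open>M\<close>, \<open>A\<close>, \<open>T\<close> are the averages
  of \<open>x\<^sup>2\<close>, \<open>\<bar>x\<bar>\<close>, \<open>\<bar>x\<bar>\<^sup>3\<close>, Cauchy--Schwarz gives \<open>M\<^sup>2 \<le> A * T\<close> and
  \<open>T\<^sup>2 \<le> M * (average of x\<^sup>4) \<le> 3 * M\<^sup>3\<close>, hence \<open>M \<le> 3 * A\<^sup>2\<close>.\<close>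

lemma L2_set_le_sign_average_abs:
  fixes c :: "nat \<Rightarrow> real"
  shows "L2_set c {1..N} \<le> sqrt 3 * sign_average N c abs"
proof -
  define M A T where "M = sign_average N c (\<lambda>x. x\<^sup>2)" and "A = sign_average N c abs"
    and "T = sign_average N c (\<lambda>x. \<bar>x\<bar> * x\<^sup>2)"
  have nonneg: "0 \<le> M" "0 \<le> A" "0 \<le> T"
    unfolding M_def A_def T_def by (auto intro: sign_average_nonneg)
  have "M\<^sup>2 \<le> A * T"
    using sign_average_Cauchy_Schwarz[of N c "\<lambda>x. sqrt \<bar>x\<bar>" "\<lambda>x. sqrt \<bar>x\<bar> * \<bar>x\<bar>"]
    by (simp add: M_def A_def T_def power_mult_distrib mult.assoc[symmetric] flip: power2_eq_square)
  moreover have "T\<^sup>2 \<le> M * (3 * M\<^sup>2)"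
  proof -
    have "T\<^sup>2 \<le> M * sign_average N c (\<lambda>x. x ^ 4)"
      using sign_average_Cauchy_Schwarz[of N c abs "\<lambda>x. x\<^sup>2"]
      by (simp add: M_def T_def flip: power_mult)
    also have "\<dots> \<le> M * (3 * M\<^sup>2)"
      using sign_average_fourth_power_le[of N c] nonneg
      by (intro mult_left_mono) (simp_all add: M_def sign_average_square)
    finally show ?thesis .
  qed
  ultimately have "(M\<^sup>2)\<^sup>2 \<le> A\<^sup>2 * (M * (3 * M\<^sup>2))"
    using nonneg by (smt (verit) mult_left_mono power_mono power_mult_distrib zero_le_power2)
  then have "M \<le> 3 * A\<^sup>2"
    using nonneg by (cases "M = 0") (simp_all add: power2_eq_square)
  then have "sqrt M \<le> sqrt 3 * A"
    using nonneg by (metis real_sqrt_abs real_sqrt_le_mono real_sqrt_mult abs_of_nonneg)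
  then show ?thesis
    by (simp add: L2_set_def M_def A_def sign_average_square)
qed

lemma seq_norm_ereal: "seq_norm (ereal r) m a = (\<Sum>i=1..m. \<bar>a i\<bar> powr r) powr (1 / r)"
  by (simp add: seq_norm_def)

lemma seq_norm_nonneg: "0 \<le> seq_norm s m a"
  unfolding seq_norm_def by (auto intro: cSup_upper2[of 0] bdd_above_finite)

lemma conj_exp_ereal:
  assumes "1 < q"
  obtains r where "1 \<le> r" "conj_exp q = ereal r"
proof (cases q)
  case (real q')
  with assms have "1 \<le> q' / (q' - 1)"
    by (simp add: field_simps)
  with real that show ?thesis
    by (simp add: conj_exp_def)
qed (use assms that in \<open>auto simp: conj_exp_def\<close>)

lemma sum_abs_powr_root_mono:
  fixes a b :: "'i \<Rightarrow> real"
  assumes "0 < r" "\<And>i. i \<in> I \<Longrightarrow> \<bar>a i\<bar> \<le> \<bar>b i\<bar>"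
  shows "(\<Sum>i\<in>I. \<bar>a i\<bar> powr r) powr (1 / r) \<le> (\<Sum>i\<in>I. \<bar>b i\<bar> powr r) powr (1 / r)"
  using assms by (intro powr_mono2 sum_mono sum_nonneg) auto

lemma sum_abs_powr_root_mult:
  fixes a :: "'i \<Rightarrow> real"
  assumes "0 < r"
  shows "(\<Sum>i\<in>I. \<bar>a i * b\<bar> powr r) powr (1 / r) = \<bar>b\<bar> * (\<Sum>i\<in>I. \<bar>a i\<bar> powr r) powr (1 / r)"
proof -
  have "(\<Sum>i\<in>I. \<bar>a i * b\<bar> powr r) = (\<Sum>i\<in>I. \<bar>a i\<bar> powr r) * \<bar>b\<bar> powr r"
    by (simp add: abs_mult powr_mult sum_distrib_right)
  then show ?thesis
    using assms by (simp add: powr_mult sum_nonneg powr_powr mult.commute)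
qed

lemma weak_norm_upper:
  fixes x :: "nat \<Rightarrow> 'a::real_normed_vector" and f :: "'a \<Rightarrow>\<^sub>L real"
  assumes "0 < r" "norm f \<le> 1"
  shows "seq_norm (ereal r) m (\<lambda>i. f (x i)) \<le> weak_norm (ereal r) m x"
  unfolding weak_norm_def
proof (rule cSup_upper)
  show "bdd_above ((\<lambda>f::'a \<Rightarrow>\<^sub>L real. seq_norm (ereal r) m (\<lambda>i. f (x i))) ` {f. norm f \<le> 1})"
  proof (rule bdd_aboveI2)
    fix g :: "'a \<Rightarrow>\<^sub>L real"
    assume "g \<in> {f. norm f \<le> 1}"
    then have "\<bar>g (x i)\<bar> \<le> \<bar>norm (x i)\<bar>" for i
      using norm_blinfun[of g "x i"] mult_right_mono[of "norm g" 1 "norm (x i)"] by simp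
    then show "seq_norm (ereal r) m (\<lambda>i. g (x i)) \<le> seq_norm (ereal r) m (\<lambda>i. norm (x i))"
      unfolding seq_norm_ereal using \<open>0 < r\<close> by (intro sum_abs_powr_root_mono) auto
  qed
qed (use assms in auto)

lemma weak_norm_nonneg:
  fixes x :: "nat \<Rightarrow> 'a::real_normed_vector"
  assumes "0 < r"
  shows "0 \<le> weak_norm (ereal r) m x"
  using weak_norm_upper[OF assms, of 0 m x] seq_norm_nonneg[of "ereal r" m "\<lambda>_. 0"] by simp

lemma weak_norm_least:
  fixes x :: "nat \<Rightarrow> 'a::real_normed_vector"
  assumes "\<And>f::'a \<Rightarrow>\<^sub>L real. norm f \<le> 1 \<Longrightarrow> seq_norm s m (\<lambda>i. blinfun_apply f (x i)) \<le> B"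
  shows "weak_norm s m x \<le> B"
  unfolding weak_norm_def by (rule cSup_least) (use assms in \<open>auto intro!: exI[of _ 0]\<close>)

text \<open>Evaluation at a unit vector is a functional of norm at most one on the dual.\<close>

lemma seq_norm_apply_le_weak_norm:
  fixes y :: "nat \<Rightarrow> ('b::real_normed_vector \<Rightarrow>\<^sub>L real)"
  assumes "0 < r"
  shows "seq_norm (ereal r) m (\<lambda>i. y i w) \<le> weak_norm (ereal r) m y * norm w"
proof (cases "w = 0")
  case True
  then show ?thesis
    using assms by (simp add: seq_norm_ereal)
next
  case False
  define ev where "ev = Blinfun (\<lambda>g::'b \<Rightarrow>\<^sub>L real. g (w /\<^sub>R norm w))"
  have ev: "ev g = g (w /\<^sub>R norm w)" for g
    unfolding ev_def by (simp add: bounded_linear_Blinfun_apply bounded_linear_apply_blinfun)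
  have "norm ev \<le> 1"
  proof (rule norm_blinfun_bound)
    fix g :: "'b \<Rightarrow>\<^sub>L real"
    show "norm (ev g) \<le> 1 * norm g"
      using norm_blinfun[of g "w /\<^sub>R norm w"] False by (simp add: ev)
  qed simp
  have "y i w = ev (y i) * norm w" for i
    using False by (simp add: ev blinfun.scaleR_right)
  then have "seq_norm (ereal r) m (\<lambda>i. y i w) = norm w * seq_norm (ereal r) m (\<lambda>i. ev (y i))"
    using sum_abs_powr_root_mult[OF assms, of "\<lambda>i. ev (y i)" "norm w"] by (simp add: seq_norm_ereal)
  also have "\<dots> \<le> norm w * weak_norm (ereal r) m y"
    using weak_norm_upper[OF assms \<open>norm ev \<le> 1\<close>] by (simp add: mult_left_mono)
  finally show ?thesis
    by (simp add: mult.commute)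
qed

lemma lr_norm_nonneg: "0 \<le> lr_norm r n z"
  by (simp add: lr_norm_def)

lemma strong_norm_nonneg: "0 \<le> strong_norm q m x"
  by (simp add: strong_norm_def seq_norm_nonneg)

lemma weak_norm_conj_exp_nonneg:
  fixes y :: "nat \<Rightarrow> 'a::real_normed_vector"
  assumes "1 < q"
  shows "0 \<le> weak_norm (conj_exp q) m y"
  using conj_exp_ereal[OF assms] weak_norm_nonneg by (metis less_le_trans zero_less_one)

lemma Holder_inequality_sum:
  fixes a b :: "'i \<Rightarrow> real"
  assumes "1 < r" "1 < s" "1/r + 1/s = 1" "\<And>i. 0 \<le> a i" "\<And>i. 0 \<le> b i"
  shows "(\<Sum>i\<in>I. a i * b i) \<le> (\<Sum>i\<in>I. a i powr r) powr (1/r) * (\<Sum>i\<in>I. b i powr s) powr (1/s)"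
proof -
  define A B where "A = (\<Sum>i\<in>I. a i powr r) powr (1/r)" and "B = (\<Sum>i\<in>I. b i powr s) powr (1/s)"
  show ?thesis
  proof (cases "A = 0 \<or> B = 0")
    case True
    then have "\<forall>i\<in>I. a i = 0 \<or> b i = 0" if "finite I"
      using assms that by (auto simp: A_def B_def sum_nonneg_eq_0_iff)
    then have "(\<Sum>i\<in>I. a i * b i) = 0"
      by (cases "finite I") (auto intro!: sum.neutral)
    then show ?thesis
      by (simp add: sum_nonneg)
  next
    case False
    then have "0 < A" "0 < B"
      by (auto simp: A_def B_def)
    have powers: "A powr r = (\<Sum>i\<in>I. a i powr r)" "B powr s = (\<Sum>i\<in>I. b i powr s)"
      using assms by (auto simp: A_def B_def powr_powr sum_nonneg)
    have "(\<Sum>i\<in>I. (a i / A) * (b i / B)) \<le> (\<Sum>i\<in>I. (a i / A) powr r / r + (b i / B) powr s / s)"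
      using assms \<open>0 < A\<close> \<open>0 < B\<close> by (intro sum_mono Youngs_inequality) auto
    also have "\<dots> = (\<Sum>i\<in>I. a i powr r) / A powr r / r + (\<Sum>i\<in>I. b i powr s) / B powr s / s"
      using assms \<open>0 < A\<close> \<open>0 < B\<close> by (simp add: powr_divide sum.distrib sum_divide_distrib)
    also have "\<dots> = 1"
      unfolding powers[symmetric] using \<open>0 < A\<close> \<open>0 < B\<close> assms(3) by simp
    finally have "(\<Sum>i\<in>I. a i * b i) / (A * B) \<le> 1"
      by (simp add: sum_divide_distrib)
    then show ?thesis
      unfolding A_def[symmetric] B_def[symmetric] using \<open>0 < A\<close> \<open>0 < B\<close>
      by (simp add: pos_divide_le_eq)
  qed
qed

lemma Holder_seq_norm:
  fixes a b :: "nat \<Rightarrow> real"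
  assumes "1 < q" "\<And>i. 0 \<le> a i"
  shows "(\<Sum>i=1..m. a i * \<bar>b i\<bar>) \<le> seq_norm q m a * seq_norm (conj_exp q) m b"
proof (cases q)
  case (real q')
  with assms have "1 < q'" by simp
  then have "(\<Sum>i=1..m. \<bar>a i\<bar> * \<bar>b i\<bar>)
      \<le> seq_norm (ereal q') m a * seq_norm (ereal (q' / (q' - 1))) m b"
    unfolding seq_norm_ereal by (intro Holder_inequality_sum) (auto simp: field_simps)
  then show ?thesis
    using assms(2) by (simp add: real conj_exp_def)
next
  case PInf
  define S where "S = Sup (insert 0 ((\<lambda>i. \<bar>a i\<bar>) ` {1..m}))"
  have "a i \<le> S" if "i \<in> {1..m}" for i
  proof -
    have "\<bar>a i\<bar> \<le> S"
      unfolding S_def by (rule cSup_upper) (use that in \<open>auto intro: bdd_above_finite\<close>)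
    then show ?thesis by simp
  qed
  then have "(\<Sum>i=1..m. a i * \<bar>b i\<bar>) \<le> (\<Sum>i=1..m. S * \<bar>b i\<bar>)"
    by (intro sum_mono mult_right_mono) auto
  then show ?thesis
    by (simp add: PInf seq_norm_def conj_exp_def S_def sum_distrib_left)
qed (use assms in simp)

lemma sum_norm_mult_abs_apply_le:
  fixes x :: "nat \<Rightarrow> 'a::real_normed_vector" and y :: "nat \<Rightarrow> ('b::real_normed_vector \<Rightarrow>\<^sub>L real)"
  assumes "1 < q"
  shows "(\<Sum>i=1..m. norm (x i) * \<bar>y i w\<bar>) \<le> strong_norm q m x * weak_norm (conj_exp q) m y * norm w"
proof -
  obtain r where "1 \<le> r" and r: "conj_exp q = ereal r"
    using conj_exp_ereal[OF assms] .
  have "(\<Sum>i=1..m. norm (x i) * \<bar>y i w\<bar>) \<le> strong_norm q m x * seq_norm (conj_exp q) m (\<lambda>i. y i w)"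
    unfolding strong_norm_def by (rule Holder_seq_norm[OF assms]) simp
  also have "\<dots> \<le> strong_norm q m x * (weak_norm (conj_exp q) m y * norm w)"
    unfolding r using \<open>1 \<le> r\<close> seq_norm_apply_le_weak_norm[of r m y w]
    by (intro mult_left_mono) (simp_all add: strong_norm_def seq_norm_nonneg)
  finally show ?thesis
    by (simp add: mult.assoc)
qed

lemma L2_set_le_sum_abs_powr_root:
  fixes z :: "'i \<Rightarrow> real"
  assumes "0 < r" "r \<le> 2" "finite I"
  shows "L2_set z I \<le> (\<Sum>j\<in>I. \<bar>z j\<bar> powr r) powr (1/r)"
proof -
  define S N where "S = (\<Sum>j\<in>I. \<bar>z j\<bar> powr r)" and "N = S powr (1/r)"
  have "0 \<le> N" "N powr r = S"
    using assms by (auto simp: S_def N_def powr_powr sum_nonneg)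
  have bound: "\<bar>z j\<bar> \<le> N" if "j \<in> I" for j
  proof -
    have "\<bar>z j\<bar> powr r \<le> S"
      unfolding S_def using that assms(3) by (intro member_le_sum) auto
    then have "(\<bar>z j\<bar> powr r) powr (1/r) \<le> N"
      unfolding N_def using assms by (intro powr_mono2) auto
    then show ?thesis
      using assms by (simp add: powr_powr)
  qed
  have "(z j)\<^sup>2 \<le> \<bar>z j\<bar> powr r * N powr (2 - r)" if "j \<in> I" for j
  proof (cases "z j = 0")
    case False
    then have "(z j)\<^sup>2 = \<bar>z j\<bar> powr r * \<bar>z j\<bar> powr (2 - r)"
      by (simp add: powr_numeral flip: powr_add)
    also have "\<dots> \<le> \<bar>z j\<bar> powr r * N powr (2 - r)"
      using assms bound[OF that] by (intro mult_left_mono powr_mono2) auto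
    finally show ?thesis .
  qed simp
  then have "(\<Sum>j\<in>I. (z j)\<^sup>2) \<le> S * N powr (2 - r)"
    unfolding S_def sum_distrib_right by (rule sum_mono)
  also have "\<dots> = N\<^sup>2"
    using \<open>N powr r = S\<close> \<open>0 \<le> N\<close> assms
    by (cases "N = 0") (auto simp flip: powr_add simp: powr_numeral)
  finally show ?thesis
    using \<open>0 \<le> N\<close> unfolding L2_set_def N_def S_def by (rule real_le_lsqrt[rotated])
qed

lemma exists_norming_sequence:
  fixes c :: "nat \<Rightarrow> real"
  assumes "1 < p" and pos: "0 < (\<Sum>j<n. \<bar>c j\<bar> powr p)"
  obtains \<alpha> where "(\<Sum>j<n. \<bar>\<alpha> j\<bar> powr (p / (p - 1))) = 1"
    and "(\<Sum>j<n. \<alpha> j * c j) = (\<Sum>j<n. \<bar>c j\<bar> powr p) powr (1/p)"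
proof
  define P N where "P = (\<Sum>j<n. \<bar>c j\<bar> powr p)" and "N = P powr (1/p)"
  have "0 < N" "N powr p = P"
    using assms by (auto simp: P_def N_def powr_powr)
  define \<alpha> where "\<alpha> j = sgn (c j) * (\<bar>c j\<bar> / N) powr (p - 1)" for j
  have "\<bar>\<alpha> j\<bar> powr (p / (p - 1)) = \<bar>c j\<bar> powr p / P" for j
    using \<open>1 < p\<close> \<open>0 < N\<close> \<open>N powr p = P\<close>
    by (cases "c j = 0") (auto simp: \<alpha>_def abs_mult powr_powr powr_divide)
  then show "(\<Sum>j<n. \<bar>\<alpha> j\<bar> powr (p / (p - 1))) = 1"
    using pos by (simp add: P_def flip: sum_divide_distrib)
  have "\<alpha> j * c j = \<bar>c j\<bar> powr p / N powr (p - 1)" for j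
  proof (cases "c j = 0")
    case False
    have "\<alpha> j * c j = (sgn (c j) * c j) * (\<bar>c j\<bar> / N) powr (p - 1)"
      by (simp add: \<alpha>_def mult_ac)
    also have "\<dots> = \<bar>c j\<bar> * \<bar>c j\<bar> powr (p - 1) / N powr (p - 1)"
      by (simp add: sgn_if powr_divide)
    also have "\<dots> = \<bar>c j\<bar> powr p / N powr (p - 1)"
      using False by (simp add: powr_mult_base)
    finally show ?thesis .
  qed (simp add: \<alpha>_def)
  then have "(\<Sum>j<n. \<alpha> j * c j) = N powr p / N powr (p - 1)"
    by (simp add: P_def \<open>N powr p = P\<close> flip: sum_divide_distrib)
  also have "\<dots> = N"
    using \<open>0 < N\<close> by (simp flip: powr_diff)
  finally show "(\<Sum>j<n. \<alpha> j * c j) = (\<Sum>j<n. \<bar>c j\<bar> powr p) powr (1/p)"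
    by (simp add: N_def P_def)
qed

locale linear_coordinates =
  fixes F :: "'a::real_normed_vector set" and v :: "'a \<Rightarrow> nat \<Rightarrow> real" and n :: nat
  assumes subspace: "subspace F"
    and add: "\<And>x y. x \<in> F \<Longrightarrow> y \<in> F \<Longrightarrow> v (x + y) = (\<lambda>i. v x i + v y i)"
    and scale: "\<And>x c. x \<in> F \<Longrightarrow> v (c *\<^sub>R x) = (\<lambda>i. c * v x i)"
    and bij: "bij_betw v F {z. \<forall>i\<ge>n. z i = 0}"
begin

definition basis :: "nat \<Rightarrow> 'a" where
  "basis j = inv_into F v (\<lambda>i. if i = j then 1 else 0)"

lemma basis_in: "j < n \<Longrightarrow> basis j \<in> F"
  and v_basis: "j < n \<Longrightarrow> v (basis j) = (\<lambda>i. if i = j then 1 else 0)"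
proof -
  assume "j < n"
  then have "(\<lambda>i. if i = j then 1 else 0 :: real) \<in> v ` F"
    using bij by (auto simp: bij_betw_def)
  then show "basis j \<in> F" "v (basis j) = (\<lambda>i. if i = j then 1 else 0)"
    unfolding basis_def by (auto intro: inv_into_into f_inv_into_f)
qed

lemma v_vanishes: "x \<in> F \<Longrightarrow> n \<le> i \<Longrightarrow> v x i = 0"
  using bij by (auto simp: bij_betw_def)

lemma v_sum:
  assumes "finite J" "\<And>j. j \<in> J \<Longrightarrow> w j \<in> F"
  shows "v (\<Sum>j\<in>J. a j *\<^sub>R w j) = (\<lambda>i. \<Sum>j\<in>J. a j * v (w j) i)"
  using assms
proof (induction J rule: finite_induct)
  case empty
  show ?case
    using scale[of 0 0] subspace_0[OF subspace] by simp
next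
  case (insert j J)
  have "(\<Sum>j\<in>J. a j *\<^sub>R w j) \<in> F"
    using insert by (intro subspace_sum[OF subspace] subspace_scale[OF subspace]) auto
  then show ?case
    using insert by (simp add: add scale subspace_scale[OF subspace])
qed

lemma sum_basis_in: "(\<Sum>j<n. a j *\<^sub>R basis j) \<in> F"
  by (intro subspace_sum[OF subspace] subspace_scale[OF subspace] basis_in) auto

lemma v_sum_basis: "v (\<Sum>j<n. a j *\<^sub>R basis j) = (\<lambda>i. if i < n then a i else 0)"
proof -
  have "v (\<Sum>j<n. a j *\<^sub>R basis j) = (\<lambda>i. \<Sum>j<n. a j * v (basis j) i)"
    by (rule v_sum) (auto intro: basis_in)
  also have "(\<lambda>i. \<Sum>j<n. a j * v (basis j) i) = (\<lambda>i. \<Sum>j<n. if i = j then a j else 0)"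
    by (intro ext sum.cong) (simp_all add: v_basis)
  finally show ?thesis
    by simp
qed

lemma basis_expansion:
  assumes "x \<in> F"
  shows "x = (\<Sum>j<n. v x j *\<^sub>R basis j)"
proof (rule inj_onD[OF bij_betw_imp_inj_on[OF bij] _ assms sum_basis_in])
  show "v x = v (\<Sum>j<n. v x j *\<^sub>R basis j)"
    using v_vanishes[OF assms] by (auto simp: v_sum_basis)
qed

end

locale Lr_coordinates = linear_coordinates F v n
  for F :: "'a::real_normed_vector set" and v n +
  fixes r a b :: real
  assumes lower: "x \<in> F \<Longrightarrow> lr_norm r n (v x) \<le> a * norm x"
    and upper: "x \<in> F \<Longrightarrow> norm x \<le> b * lr_norm r n (v x)"
    and a_nonneg: "0 \<le> a" and b_nonneg: "0 \<le> b"
begin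

lemma weak_norm_basis_le:
  assumes "1 < p" "r = p / (p - 1)"
  shows "weak_norm (ereal p) n (\<lambda>k. basis (k - 1)) \<le> b"
proof (rule weak_norm_least)
  fix f :: "'a \<Rightarrow>\<^sub>L real"
  assume "norm f \<le> 1"
  define c where "c j = f (basis j)" for j
  have "(\<Sum>j<n. \<bar>c j\<bar> powr p) powr (1/p) \<le> b"
  proof (cases "(\<Sum>j<n. \<bar>c j\<bar> powr p) = 0")
    case False
    then have "0 < (\<Sum>j<n. \<bar>c j\<bar> powr p)"
      by (simp add: order_le_neq_trans sum_nonneg)
    then obtain \<alpha> where \<alpha>: "(\<Sum>j<n. \<bar>\<alpha> j\<bar> powr (p / (p - 1))) = 1"
      and norming: "(\<Sum>j<n. \<alpha> j * c j) = (\<Sum>j<n. \<bar>c j\<bar> powr p) powr (1/p)"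
      using exists_norming_sequence[OF \<open>1 < p\<close>] by blast
    define x where "x = (\<Sum>j<n. \<alpha> j *\<^sub>R basis j)"
    have "(\<Sum>j<n. \<bar>c j\<bar> powr p) powr (1/p) = f x"
      unfolding x_def norming[symmetric] by (simp add: c_def blinfun.sum_right blinfun.scaleR_right)
    also have "\<dots> \<le> norm x"
      using norm_blinfun[of f x] mult_right_mono[OF \<open>norm f \<le> 1\<close>, of "norm x"] by simp
    also have "\<dots> \<le> b"
      using upper[OF sum_basis_in, of \<alpha>] \<alpha> \<open>r = p / (p - 1)\<close>
      by (simp add: x_def v_sum_basis lr_norm_def)
    finally show ?thesis .
  qed (simp add: b_nonneg)
  then show "seq_norm (ereal p) n (\<lambda>i. f (basis (i - 1))) \<le> b"
    by (simp add: seq_norm_ereal sum.atLeast1_atMost_eq c_def)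
qed

lemma abs_linear_le_sign_average:
  assumes "linear g" "0 < r" "r \<le> 2" "x \<in> F"
  shows "\<bar>g x\<bar> \<le> sqrt 3 * a * norm x * sign_average n (\<lambda>k. basis (k - 1)) (\<lambda>w. \<bar>g w\<bar>)"
proof -
  define d where "d k = g (basis (k - 1))" for k
  have "g x = g (\<Sum>j<n. v x j *\<^sub>R basis j)"
    using basis_expansion[OF \<open>x \<in> F\<close>] by (rule arg_cong)
  also have "\<dots> = (\<Sum>j<n. v x j * d (Suc j))"
    using \<open>linear g\<close> by (simp add: linear_sum linear_scale d_def)
  finally have "\<bar>g x\<bar> \<le> (\<Sum>j<n. \<bar>v x j\<bar> * \<bar>d (Suc j)\<bar>)"
    by (simp add: sum_abs abs_mult flip: abs_mult)
  also have "\<dots> \<le> L2_set (v x) {..<n} * L2_set (\<lambda>j. d (Suc j)) {..<n}"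
    by (rule L2_set_mult_ineq)
  also have "\<dots> \<le> (a * norm x) * (sqrt 3 * sign_average n d abs)"
  proof (rule mult_mono)
    show "L2_set (v x) {..<n} \<le> a * norm x"
      using L2_set_le_sum_abs_powr_root[OF \<open>0 < r\<close> \<open>r \<le> 2\<close>, of "{..<n}" "v x"] lower[OF \<open>x \<in> F\<close>]
      by (simp add: lr_norm_def)
    show "L2_set (\<lambda>j. d (Suc j)) {..<n} \<le> sqrt 3 * sign_average n d abs"
      using L2_set_le_sign_average_abs[of d n] by (simp add: L2_set_def sum.atLeast1_atMost_eq)
  qed (simp_all add: a_nonneg L2_set_def sum_nonneg)
  also have "sign_average n d abs = sign_average n (\<lambda>k. basis (k - 1)) (\<lambda>w. \<bar>g w\<bar>)"
    unfolding d_def using \<open>linear g\<close> by (rule sign_average_compose_linear[symmetric])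
  finally show ?thesis
    by (simp add: mult_ac)
qed

lemma sign_average_norm_le:
  fixes u :: "'a \<Rightarrow>\<^sub>L 'b::real_normed_vector"
  assumes "1 < p" "r = p / (p - 1)" "0 \<le> C"
    and almost: "\<And>m (x::nat \<Rightarrow> 'a).
      sqrt (integral {0..1} (\<lambda>t. (norm (\<Sum>i=1..m. rademacher i t *\<^sub>R u (x i)))\<^sup>2))
        \<le> C * weak_norm (ereal p) m x"
  shows "sign_average n (\<lambda>k. u (basis (k - 1))) norm \<le> C * b"
proof -
  let ?e = "\<lambda>k. basis (k - 1)"
  have "sign_average n (\<lambda>k. u (?e k)) norm \<le> sqrt (sign_average n (\<lambda>k. u (?e k)) (\<lambda>w. (norm w)\<^sup>2))"
    by (rule sign_average_le_sqrt)
  also have "sign_average n (\<lambda>k. u (?e k)) (\<lambda>w. (norm w)\<^sup>2)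
      = integral {0..1} (\<lambda>t. (norm (\<Sum>i=1..n. rademacher i t *\<^sub>R u (?e i)))\<^sup>2)"
    using has_integral_rademacher_sum[of "\<lambda>w. (norm w)\<^sup>2" n "\<lambda>k. u (?e k)"]
    by (simp add: rademacher_sum_def integral_unique)
  also have "sqrt \<dots> \<le> C * weak_norm (ereal p) n ?e"
    by (rule almost)
  also have "\<dots> \<le> C * b"
    using weak_norm_basis_le[OF assms(1,2)] \<open>0 \<le> C\<close> by (rule mult_left_mono)
  finally show ?thesis .
qed

lemma Cohen_sum_le:
  fixes u :: "'a \<Rightarrow>\<^sub>L 'b::real_normed_vector" and x :: "nat \<Rightarrow> 'a"
    and y :: "nat \<Rightarrow> ('b \<Rightarrow>\<^sub>L real)"
  assumes "0 < r" "r \<le> 2" "1 < q"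
    and average: "sign_average n (\<lambda>k. u (basis (k - 1))) norm \<le> K"
    and x: "x ` {1..m} \<subseteq> F"
  shows "(\<Sum>i=1..m. \<bar>y i (u (x i))\<bar>)
    \<le> sqrt 3 * a * K * strong_norm q m x * weak_norm (conj_exp q) m y"
proof -
  define e where "e k = basis (k - 1)" for k
  define S W where "S = strong_norm q m x" and "W = weak_norm (conj_exp q) m y"
  have "0 \<le> S" "0 \<le> W"
    using weak_norm_conj_exp_nonneg[OF \<open>1 < q\<close>] by (simp_all add: S_def W_def strong_norm_nonneg)
  have linear: "linear (\<lambda>w. y i (u w))" for i
    using bounded_linear_compose[OF blinfun.bounded_linear_right blinfun.bounded_linear_right]
    by (rule bounded_linear.linear)
  have "(\<Sum>i=1..m. \<bar>y i (u (x i))\<bar>)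
      \<le> (\<Sum>i=1..m. sqrt 3 * a * norm (x i) * sign_average n e (\<lambda>w. \<bar>y i (u w)\<bar>))"
    unfolding e_def using linear \<open>0 < r\<close> \<open>r \<le> 2\<close> x
    by (intro sum_mono abs_linear_le_sign_average) auto
  also have "\<dots> = sqrt 3 * a * sign_average n (\<lambda>k. u (e k)) (\<lambda>w. \<Sum>i=1..m. norm (x i) * \<bar>y i w\<bar>)"
  proof -
    have "sign_average n e (\<lambda>w. \<bar>y i (u w)\<bar>) = sign_average n (\<lambda>k. u (e k)) (\<lambda>w. \<bar>y i w\<bar>)" for i
      by (rule sign_average_compose_linear[where h="blinfun_apply u" and f="\<lambda>w. \<bar>y i w\<bar>"])
        (simp add: blinfun.bounded_linear_right bounded_linear.linear)
    then show ?thesis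
      by (simp add: sign_average_sum sign_average_cmult sum_distrib_left mult_ac)
  qed
  also have "\<dots> \<le> sqrt 3 * a * sign_average n (\<lambda>k. u (e k)) (\<lambda>w. S * W * norm w)"
    unfolding S_def W_def using a_nonneg
    by (intro mult_left_mono sign_average_mono sum_norm_mult_abs_apply_le \<open>1 < q\<close>) auto
  also have "\<dots> \<le> sqrt 3 * a * (S * W * K)"
    using average a_nonneg \<open>0 \<le> S\<close> \<open>0 \<le> W\<close>
    by (simp add: e_def sign_average_cmult mult_left_mono)
  finally show ?thesis
    by (simp add: S_def W_def mult_ac)
qed

end

lemma Lr_space_coordinates:
  assumes "Lr_space r TYPE('a::real_normed_vector)"
  obtains lam where "1 < lam"
    and "\<And>S::'a set. finite S \<Longrightarrow>
      \<exists>F v a b. S \<subseteq> F \<and> Lr_coordinates F v (dim F) r a b \<and> a * b \<le> lam"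
proof -
  from assms obtain lam where "1 < lam" and charts: "\<And>E::'a set. fin_dim_subspace E \<Longrightarrow>
      \<exists>F. fin_dim_subspace F \<and> E \<subseteq> F \<and>
        (\<exists>v a b. (\<forall>x\<in>F. \<forall>y\<in>F. v (x + y) = (\<lambda>i. v x i + v y i)) \<and>
          (\<forall>x\<in>F. \<forall>c. v (c *\<^sub>R x) = (\<lambda>i. c * v x i)) \<and>
          bij_betw v F {z. \<forall>i\<ge>dim F. z i = 0} \<and>
          (\<forall>x\<in>F. lr_norm r (dim F) (v x) \<le> a * norm x) \<and>
          (\<forall>x\<in>F. norm x \<le> b * lr_norm r (dim F) (v x)) \<and> a * b \<le> lam)"
    unfolding Lr_space_def by blast
  show ?thesis
  proof (rule that[OF \<open>1 < lam\<close>])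
    fix S :: "'a set"
    assume "finite S"
    then have "fin_dim_subspace (span S)"
      by (auto simp: fin_dim_subspace_def subspace_span)
    then obtain F v a b where "fin_dim_subspace F" "span S \<subseteq> F"
      and chart: "\<forall>x\<in>F. \<forall>y\<in>F. v (x + y) = (\<lambda>i. v x i + v y i)"
        "\<forall>x\<in>F. \<forall>c. v (c *\<^sub>R x) = (\<lambda>i. c * v x i)" "bij_betw v F {z. \<forall>i\<ge>dim F. z i = 0}"
      and lower: "\<forall>x\<in>F. lr_norm r (dim F) (v x) \<le> a * norm x"
      and upper: "\<forall>x\<in>F. norm x \<le> b * lr_norm r (dim F) (v x)" and "a * b \<le> lam"
      using charts by blast
    \<comment> \<open>The constants of the definition may be negative (then \<open>F = {0}\<close>); clip them at \<open>0\<close>.\<close>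
    have clip: "y \<le> max c 0 * z" if "y \<le> c * z" "0 \<le> z" for y c z :: real
      using that by (metis max.cobounded1 mult_right_mono order_trans)
    have "Lr_coordinates F v (dim F) r (max a 0) (max b 0)"
      using chart lower upper \<open>fin_dim_subspace F\<close>
      by unfold_locales (auto simp: fin_dim_subspace_def clip lr_norm_nonneg)
    moreover have "max a 0 * max b 0 \<le> lam"
      using \<open>a * b \<le> lam\<close> \<open>1 < lam\<close> by (auto simp: max_def)
    moreover have "S \<subseteq> F"
      using span_superset \<open>span S \<subseteq> F\<close> by (rule order_trans)
    ultimately show "\<exists>F v a b. S \<subseteq> F \<and> Lr_coordinates F v (dim F) r a b \<and> a * b \<le> lam"
      by blast
  qed
qed

theorem theorem3p1:
  fixes p :: real and q :: ereal
    and u :: "'a::banach \<Rightarrow>\<^sub>L 'b::banach"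
  assumes "2 \<le> p" and "1 < q"
    and "Lr_space (p / (p - 1)) TYPE('a)"
    and "almost_summing p u"
  shows "Cohen_strongly_summing q u"
proof -
  obtain C where "0 \<le> C" and almost: "\<And>m (x::nat \<Rightarrow> 'a).
      sqrt (integral {0..1} (\<lambda>t. (norm (\<Sum>i=1..m. rademacher i t *\<^sub>R u (x i)))\<^sup>2))
        \<le> C * weak_norm (ereal p) m x"
    using assms(4) unfolding almost_summing_def by blast
  obtain lam where "1 < lam" and charts: "\<And>S::'a set. finite S \<Longrightarrow>
      \<exists>F v a b. S \<subseteq> F \<and> Lr_coordinates F v (dim F) (p / (p - 1)) a b \<and> a * b \<le> lam"
    using Lr_space_coordinates[OF assms(3)] by blast
  have "0 < p / (p - 1)" "p / (p - 1) \<le> 2" "1 < p"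
    using \<open>2 \<le> p\<close> by (simp_all add: field_simps)
  have "(\<Sum>i=1..m. \<bar>y i (u (x i))\<bar>)
      \<le> sqrt 3 * C * lam * strong_norm q m x * weak_norm (conj_exp q) m y"
    for m and x :: "nat \<Rightarrow> 'a" and y :: "nat \<Rightarrow> ('b \<Rightarrow>\<^sub>L real)"
  proof -
    obtain F v a b where "x ` {1..m} \<subseteq> F" "a * b \<le> lam"
      and "Lr_coordinates F v (dim F) (p / (p - 1)) a b"
      using charts[of "x ` {1..m}"] by blast
    then interpret Lr_coordinates F v "dim F" "p / (p - 1)" a b
      by simp
    have "sign_average (dim F) (\<lambda>k. u (basis (k - 1))) norm \<le> C * b"
      using \<open>1 < p\<close> refl \<open>0 \<le> C\<close> almost by (rule sign_average_norm_le)
    then have "(\<Sum>i=1..m. \<bar>y i (u (x i))\<bar>)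
        \<le> sqrt 3 * a * (C * b) * strong_norm q m x * weak_norm (conj_exp q) m y"
      using \<open>0 < p / (p - 1)\<close> \<open>p / (p - 1) \<le> 2\<close> \<open>1 < q\<close> \<open>x ` {1..m} \<subseteq> F\<close>
      by (intro Cohen_sum_le)
    also have "\<dots> = sqrt 3 * C * (a * b) * strong_norm q m x * weak_norm (conj_exp q) m y"
      by (simp add: mult_ac)
    also have "\<dots> \<le> sqrt 3 * C * lam * strong_norm q m x * weak_norm (conj_exp q) m y"
      using \<open>a * b \<le> lam\<close> \<open>0 \<le> C\<close> strong_norm_nonneg weak_norm_conj_exp_nonneg[OF \<open>1 < q\<close>]
      by (intro mult_right_mono mult_left_mono) auto
    finally show ?thesis .
  qed
  then show ?thesis
    unfolding Cohen_strongly_summing_def using \<open>0 \<le> C\<close> \<open>1 < lam\<close>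
    by (intro exI[of _ "sqrt 3 * C * lam"]) auto
qed

end
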